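(* Let $R=(\mathbb{Z}_I,\oplus,\otimes)$ be an $I$-based ring and $S=(\mathbb{Z}_L,\oplus,\otimes)$ an $L$-based ring which is a based subring of $R$. Let $N=(\mathbb{Z}_J,\oplus,\otimes)$ be a based $S$-module with basis $J$. If $S$ is divisible in $R$, then the induced $R$-module $\mathrm{Ind}^R_S(N)=R\odot_S N$ is a torsion $R$-module whenever $N$ is a torsion $S$-module.
   Context: For a set $X$, $\mathbb{Z}_X$ is the free $\mathbb{Z}$-module with basis $X$. Let $(I,\mathbbm{1})$ be an involutive pointed set (involution $\alpha\mapsto\overline{\alpha}$). A ring structure on $\mathbb{Z}_I$ is given by constants $N^i_{\alpha,i'}\in\mathbb{N}\cup\{0\}$ with $\alpha\otimes i'=\sum_i N^i_{\alpha,i'} i$ (finite sums); write $i\subset\alpha\otimes i'$ if $N^i_{\alpha,i'}\neq0$. It is $I$-based if $\overline{\alpha\otimes\alpha'}=\overline{\alpha'}\otimes\overline{\alpha}$ and $\mathbbm{1}\subset\overline{\alpha}\otimes\alpha'$ iff $\alpha=\alpha'$. A module structure of $\mathbb{Z}_I$ on $\mathbb{Z}_J$ is given by constants $N^j_{\alpha,j'}\ge0$ with $\alpha\otimes j'=\sum_j N^j_{\alpha,j'}j$; it is $J$-based if $j\subset\alpha\otimes j'\iff j'\subset\overline{\alpha}\otimes j$; co-finite if for all $j,j'$ the set $\{\alpha: j\subset\alpha\otimes j'\}$ is finite; connected if for all $j,j'$ there is $\alpha$ with $j\subset\alpha\otimes j'$; torsion if co-finite and connected. $S$ is a based subring of $R$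 if $L\subset I$ is closed under involution, contains $\mathbbm{1}$, and the products of elements of $L$ only involve elements of $L$. $S$ is divisible in $R$ if $R\cong\bigoplus_{\Omega}S$ as based $S$-modules (an $S$-module isomorphism sending basis elements to basis elements). $\mathrm{Ind}^R_S(N)=R\odot_S N$ is the algebraic tensor product with left $R$-action by multiplication on the first factor. *)

theory Defs
  imports Main
begin

text \<open>Elements of a free Z-module Z_X are modelled as finitely supported
  integer-valued functions on X.  A ring structure on Z_I is given by
  structure constants NR a b c = coefficient of c in a \<otimes> b; a module
  structure of Z_A (A a subset of I) on Z_J by NM a j' j = coefficient of j
  in a \<otimes> j'.\<close>

definition supp3 :: "('a \<Rightarrow> 'b \<Rightarrow> 'c \<Rightarrow> nat) \<Rightarrow> 'a \<Rightarrow> 'b \<Rightarrow> 'c set" where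
  "supp3 N a b = {c. N a b c \<noteq> 0}"

definition ring_struct :: "'i set \<Rightarrow> 'i \<Rightarrow> ('i \<Rightarrow> 'i \<Rightarrow> 'i \<Rightarrow> nat) \<Rightarrow> bool" where
  "ring_struct I one NR \<longleftrightarrow>
     one \<in> I \<and>
     (\<forall>a\<in>I. \<forall>b\<in>I. finite (supp3 NR a b) \<and> supp3 NR a b \<subseteq> I) \<and>
     (\<forall>a\<in>I. \<forall>c. NR one a c = (if c = a then 1 else 0) \<and> NR a one c = (if c = a then 1 else 0)) \<and>
     (\<forall>a\<in>I. \<forall>b\<in>I. \<forall>c\<in>I. \<forall>d.
        (\<Sum>k\<in>supp3 NR a b. NR a b k * NR k c d) = (\<Sum>k\<in>supp3 NR b c. NR b c k * NR a k d))"

definition involutive_pointed :: "'i set \<Rightarrow> 'i \<Rightarrow> ('i \<Rightarrow> 'i) \<Rightarrow> bool" where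
  "involutive_pointed I one bar \<longleftrightarrow>
     one \<in> I \<and> bar one = one \<and> (\<forall>a\<in>I. bar a \<in> I \<and> bar (bar a) = a)"

definition based_ring :: "'i set \<Rightarrow> 'i \<Rightarrow> ('i \<Rightarrow> 'i) \<Rightarrow> ('i \<Rightarrow> 'i \<Rightarrow> 'i \<Rightarrow> nat) \<Rightarrow> bool" where
  "based_ring I one bar NR \<longleftrightarrow>
     involutive_pointed I one bar \<and> ring_struct I one NR \<and>
     (\<forall>a\<in>I. \<forall>b\<in>I. \<forall>c\<in>I. NR a b c = NR (bar b) (bar a) (bar c)) \<and>
     (\<forall>a\<in>I. \<forall>a'\<in>I. NR (bar a) a' one \<noteq> 0 \<longleftrightarrow> a = a')"

definition based_subring :: "'i set \<Rightarrow> 'i \<Rightarrow> ('i \<Rightarrow> 'i) \<Rightarrow> ('i \<Rightarrow> 'i \<Rightarrow> 'i \<Rightarrow> nat) \<Rightarrow> 'i set \<Rightarrow> bool" where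
  "based_subring I one bar NR L \<longleftrightarrow>
     L \<subseteq> I \<and> one \<in> L \<and> (\<forall>a\<in>L. bar a \<in> L) \<and>
     (\<forall>a\<in>L. \<forall>b\<in>L. supp3 NR a b \<subseteq> L)"

definition module_struct :: "'i set \<Rightarrow> 'i \<Rightarrow> ('i \<Rightarrow> 'i \<Rightarrow> 'i \<Rightarrow> nat) \<Rightarrow> 'j set \<Rightarrow> ('i \<Rightarrow> 'j \<Rightarrow> 'j \<Rightarrow> nat) \<Rightarrow> bool" where
  "module_struct A one NR J NM \<longleftrightarrow>
     (\<forall>a\<in>A. \<forall>j\<in>J. finite (supp3 NM a j) \<and> supp3 NM a j \<subseteq> J) \<and>
     (\<forall>j\<in>J. \<forall>j'. NM one j j' = (if j' = j then 1 else 0)) \<and>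
     (\<forall>a\<in>A. \<forall>b\<in>A. \<forall>j\<in>J. \<forall>j''.
        (\<Sum>k\<in>supp3 NR a b. NR a b k * NM k j j'') = (\<Sum>j'\<in>supp3 NM b j. NM b j j' * NM a j' j''))"

definition based_module :: "'i set \<Rightarrow> 'i \<Rightarrow> ('i \<Rightarrow> 'i) \<Rightarrow> ('i \<Rightarrow> 'i \<Rightarrow> 'i \<Rightarrow> nat) \<Rightarrow> 'j set \<Rightarrow> ('i \<Rightarrow> 'j \<Rightarrow> 'j \<Rightarrow> nat) \<Rightarrow> bool" where
  "based_module A one bar NR J NM \<longleftrightarrow>
     module_struct A one NR J NM \<and>
     (\<forall>a\<in>A. \<forall>j\<in>J. \<forall>j'\<in>J. NM a j' j \<noteq> 0 \<longleftrightarrow> NM (bar a) j j' \<noteq> 0)"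

definition cofinite_module :: "'i set \<Rightarrow> 'j set \<Rightarrow> ('i \<Rightarrow> 'j \<Rightarrow> 'j \<Rightarrow> nat) \<Rightarrow> bool" where
  "cofinite_module A J NM \<longleftrightarrow> (\<forall>j\<in>J. \<forall>j'\<in>J. finite {a\<in>A. NM a j' j \<noteq> 0})"

definition connected_module :: "'i set \<Rightarrow> 'j set \<Rightarrow> ('i \<Rightarrow> 'j \<Rightarrow> 'j \<Rightarrow> nat) \<Rightarrow> bool" where
  "connected_module A J NM \<longleftrightarrow> (\<forall>j\<in>J. \<forall>j'\<in>J. \<exists>a\<in>A. NM a j' j \<noteq> 0)"

definition torsion_module :: "'i set \<Rightarrow> 'j set \<Rightarrow> ('i \<Rightarrow> 'j \<Rightarrow> 'j \<Rightarrow> nat) \<Rightarrow> bool" where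
  "torsion_module A J NM \<longleftrightarrow> cofinite_module A J NM \<and> connected_module A J NM"

text \<open>S (basis L) is divisible in R (basis I): R \<cong> \<Oplus>_\<Omega> S as based (left)
  S-modules, i.e. a bijection of bases I \<rightarrow> \<Omega> \<times> L intertwining the S-actions.
  The index set \<Omega> is taken inside the type of I, which is no loss of
  generality since |\<Omega>| \<le> |I|.\<close>
definition divisible :: "'i set \<Rightarrow> 'i set \<Rightarrow> ('i \<Rightarrow> 'i \<Rightarrow> 'i \<Rightarrow> nat) \<Rightarrow> bool" where
  "divisible I L NR \<longleftrightarrow>
     (\<exists>(\<Omega>::'i set) \<phi>. bij_betw \<phi> I (\<Omega> \<times> L) \<and>
        (\<forall>a\<in>L. \<forall>i\<in>I. \<forall>i'\<in>I.
           NR a i' i = (if fst (\<phi> i) = fst (\<phi> i') then NR a (snd (\<phi> i')) (snd (\<phi> i)) else 0)))"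

definition finsupp_on :: "'a set \<Rightarrow> ('a \<Rightarrow> int) \<Rightarrow> bool" where
  "finsupp_on X f \<longleftrightarrow> finite {x. f x \<noteq> 0} \<and> {x. f x \<noteq> 0} \<subseteq> X"

definition delta :: "'a \<Rightarrow> 'a \<Rightarrow> int" where
  "delta x = (\<lambda>y. if y = x then 1 else 0)"

text \<open>The balancing relation (r \<otimes> s) \<odot> n - r \<odot> (s \<otimes> n) in Z_{I\<times>J}.\<close>
definition tens_rel :: "('i \<Rightarrow> 'i \<Rightarrow> 'i \<Rightarrow> nat) \<Rightarrow> ('i \<Rightarrow> 'j \<Rightarrow> 'j \<Rightarrow> nat) \<Rightarrow> 'i \<Rightarrow> 'i \<Rightarrow> 'j \<Rightarrow> ('i \<times> 'j \<Rightarrow> int)" where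
  "tens_rel NR NM r s n =
     (\<lambda>(i, j). (if j = n then int (NR r s i) else 0) - (if i = r then int (NM s n j) else 0))"

definition zspan :: "('a \<Rightarrow> int) set \<Rightarrow> ('a \<Rightarrow> int) set" where
  "zspan X = {f. \<exists>F c. finite F \<and> F \<subseteq> X \<and> f = (\<lambda>x. \<Sum>g\<in>F. c g * g x)}"

text \<open>The subgroup K of relations defining the algebraic tensor product over S.\<close>
definition ind_rels :: "'i set \<Rightarrow> 'i set \<Rightarrow> 'j set \<Rightarrow> ('i \<Rightarrow> 'i \<Rightarrow> 'i \<Rightarrow> nat) \<Rightarrow> ('i \<Rightarrow> 'j \<Rightarrow> 'j \<Rightarrow> nat) \<Rightarrow> ('i \<times> 'j \<Rightarrow> int) set" where
  "ind_rels I L J NR NM = zspan {tens_rel NR NM r s n | r s n. r \<in> I \<and> s \<in> L \<and> n \<in> J}"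

text \<open>Left R-action on Z_{I\<times>J}: \<alpha> \<cdot> (i' \<odot> j) = (\<alpha> \<otimes> i') \<odot> j.\<close>
definition ind_action :: "('i \<Rightarrow> 'i \<Rightarrow> 'i \<Rightarrow> nat) \<Rightarrow> 'i \<Rightarrow> ('i \<times> 'j \<Rightarrow> int) \<Rightarrow> ('i \<times> 'j \<Rightarrow> int)" where
  "ind_action NR \<alpha> f =
     (\<lambda>(i, j). \<Sum>i'\<in>{i'. \<exists>j'. f (i', j') \<noteq> 0}. int (NR \<alpha> i' i) * f (i', j))"

text \<open>B \<subseteq> I \<times> J indexes a Z-basis {b_1 \<odot> b_2 | b \<in> B} of Z_{I\<times>J}/K: every
  class has a unique representative supported on B.\<close>
definition ind_basis :: "'i set \<Rightarrow> 'j set \<Rightarrow> ('i \<times> 'j \<Rightarrow> int) set \<Rightarrow> ('i \<times> 'j) set \<Rightarrow> bool" where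
  "ind_basis I J K B \<longleftrightarrow> B \<subseteq> I \<times> J \<and>
     (\<forall>f. finsupp_on (I \<times> J) f \<longrightarrow> (\<exists>!c. finsupp_on B c \<and> (\<lambda>x. f x - c x) \<in> K))"

definition ind_coeff :: "('i \<times> 'j \<Rightarrow> int) set \<Rightarrow> ('i \<times> 'j) set \<Rightarrow> ('i \<times> 'j \<Rightarrow> int) \<Rightarrow> ('i \<times> 'j \<Rightarrow> int)" where
  "ind_coeff K B f = (THE c. finsupp_on B c \<and> (\<lambda>x. f x - c x) \<in> K)"

definition ind_const :: "'i set \<Rightarrow> 'i set \<Rightarrow> 'j set \<Rightarrow> ('i \<Rightarrow> 'i \<Rightarrow> 'i \<Rightarrow> nat) \<Rightarrow> ('i \<Rightarrow> 'j \<Rightarrow> 'j \<Rightarrow> nat)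
    \<Rightarrow> ('i \<times> 'j) set \<Rightarrow> 'i \<Rightarrow> 'i \<times> 'j \<Rightarrow> 'i \<times> 'j \<Rightarrow> int" where
  "ind_const I L J NR NM B \<alpha> b' b =
     ind_coeff (ind_rels I L J NR NM) B (ind_action NR \<alpha> (delta b')) b"

end

(* Divisibility gives R = \<Oplus>_\<Omega> S as left S-modules; conjugating with bar, every basis
   element i of R is uniquely block_one i \<otimes> coord i, where coord i \<in> L and block_one i is the
   generator (coordinate one) of the block of i. Hence R \<odot>_S N = \<Oplus>_\<Omega> N, with basis
   {block generators} \<times> J, and i \<odot> n has normal form block_one i \<odot> (coord i \<otimes> n). In this
   basis the coefficient of (r, j) in \<alpha> \<cdot> (r', j') is the sum of N_{\<alpha> r'}^i N_{coord i, j'}^j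
   over the i with block_one i = r. It is nonnegative; it is nonzero for some \<alpha>, because N is
   connected and every i occurs in some \<alpha> \<otimes> r'; and it is nonzero for finitely many \<alpha> only,
   because co-finiteness of N leaves finitely many i, and by Frobenius reciprocity
   i \<subseteq> \<alpha> \<otimes> r' forces \<alpha> \<subseteq> i \<otimes> bar r'. *)

theory Submission
  imports Defs
begin

lemma sum_in_zspan:
  assumes "finite P" "\<And>p. p \<in> P \<Longrightarrow> G p \<in> X"
  shows "(\<lambda>x. \<Sum>p\<in>P. a p * G p x) \<in> zspan X"
proof -
  define c where "c h = (\<Sum>p\<in>{p\<in>P. G p = h}. a p)" for h
  have "(\<lambda>x. \<Sum>p\<in>P. a p * G p x) = (\<lambda>x. \<Sum>h\<in>G ` P. c h * h x)"
  proof
    fix x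
    have "(\<Sum>p\<in>P. a p * G p x) = (\<Sum>h\<in>G ` P. \<Sum>p\<in>{p\<in>P. G p = h}. a p * G p x)"
      by (rule sum.image_gen[OF assms(1)])
    also have "\<dots> = (\<Sum>h\<in>G ` P. c h * h x)"
      unfolding c_def sum_distrib_right by (rule sum.cong) auto
    finally show "(\<Sum>p\<in>P. a p * G p x) = (\<Sum>h\<in>G ` P. c h * h x)" .
  qed
  then show ?thesis unfolding zspan_def using assms by blast
qed

definition lin_ext :: "('a \<Rightarrow> 'a \<Rightarrow> int) \<Rightarrow> ('a \<Rightarrow> int) \<Rightarrow> 'a \<Rightarrow> int" where
  "lin_ext t f y = (\<Sum>p\<in>{p. f p \<noteq> 0}. f p * t p y)"

lemma lin_ext_eq_sum:
  "finite P \<Longrightarrow> {p. f p \<noteq> 0} \<subseteq> P \<Longrightarrow> lin_ext t f y = (\<Sum>p\<in>P. f p * t p y)"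
  unfolding lin_ext_def by (rule sum.mono_neutral_left) auto

lemma lin_ext_diff:
  assumes "finite {p. f p \<noteq> 0}" "finite {p. g p \<noteq> 0}"
  shows "lin_ext t (\<lambda>x. f x - g x) y = lin_ext t f y - lin_ext t g y"
proof -
  let ?P = "{p. f p \<noteq> 0} \<union> {p. g p \<noteq> 0}"
  have fin: "finite ?P" using assms by simp
  have "lin_ext t (\<lambda>x. f x - g x) y = (\<Sum>p\<in>?P. (f p - g p) * t p y)"
    by (rule lin_ext_eq_sum[OF fin]) auto
  also have "\<dots> = (\<Sum>p\<in>?P. f p * t p y) - (\<Sum>p\<in>?P. g p * t p y)"
    by (simp add: left_diff_distrib sum_subtractf)
  also have "\<dots> = lin_ext t f y - lin_ext t g y"
    using lin_ext_eq_sum[OF fin, of f] lin_ext_eq_sum[OF fin, of g] by auto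
  finally show ?thesis .
qed

lemma lin_ext_sum:
  assumes "finite F" "\<And>g. g \<in> F \<Longrightarrow> finite {p. g p \<noteq> 0}"
  shows "lin_ext t (\<lambda>x. \<Sum>g\<in>F. c g * g x) y = (\<Sum>g\<in>F. c g * lin_ext t g y)"
proof -
  let ?P = "\<Union>g\<in>F. {p. g p \<noteq> 0}"
  have fin: "finite ?P" using assms by blast
  have "{p. (\<Sum>g\<in>F. c g * g p) \<noteq> 0} \<subseteq> ?P"
  proof
    fix p assume "p \<in> {p. (\<Sum>g\<in>F. c g * g p) \<noteq> 0}"
    then obtain g where "g \<in> F" "c g * g p \<noteq> 0"
      by (auto elim: sum.not_neutral_contains_not_neutral)
    then show "p \<in> ?P" by auto
  qed
  then have "lin_ext t (\<lambda>x. \<Sum>g\<in>F. c g * g x) y = (\<Sum>p\<in>?P. (\<Sum>g\<in>F. c g * g p) * t p y)"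
    by (rule lin_ext_eq_sum[OF fin])
  also have "\<dots> = (\<Sum>p\<in>?P. \<Sum>g\<in>F. c g * (g p * t p y))"
    by (simp add: sum_distrib_right mult.assoc)
  also have "\<dots> = (\<Sum>g\<in>F. \<Sum>p\<in>?P. c g * (g p * t p y))"
    by (rule sum.swap)
  also have "\<dots> = (\<Sum>g\<in>F. c g * (\<Sum>p\<in>?P. g p * t p y))"
    by (simp add: sum_distrib_left)
  also have "\<dots> = (\<Sum>g\<in>F. c g * lin_ext t g y)"
  proof (rule sum.cong[OF refl])
    fix g assume "g \<in> F"
    then have "lin_ext t g y = (\<Sum>p\<in>?P. g p * t p y)" by (intro lin_ext_eq_sum[OF fin]) auto
    then show "c g * (\<Sum>p\<in>?P. g p * t p y) = c g * lin_ext t g y" by simp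
  qed
  finally show ?thesis .
qed

lemma lin_ext_zspan_eq_0:
  assumes "\<And>g. g \<in> X \<Longrightarrow> finite {p. g p \<noteq> 0} \<and> (\<forall>y. lin_ext t g y = 0)"
    and "g \<in> zspan X"
  shows "lin_ext t g y = 0"
proof -
  obtain F c where F: "finite F" "F \<subseteq> X" and g: "g = (\<lambda>x. \<Sum>h\<in>F. c h * h x)"
    using assms(2) unfolding zspan_def by blast
  have "lin_ext t g y = (\<Sum>h\<in>F. c h * lin_ext t h y)"
    unfolding g using F assms(1) by (intro lin_ext_sum) auto
  also have "\<dots> = 0" using F assms(1) by (intro sum.neutral) auto
  finally show ?thesis .
qed

lemma lin_ext_id_on:
  assumes "\<And>p. p \<in> B \<Longrightarrow> t p = delta p" and "finsupp_on B c"
  shows "lin_ext t c = c"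
proof
  fix y
  have fin: "finite {p. c p \<noteq> 0}" and sub: "{p. c p \<noteq> 0} \<subseteq> B"
    using assms(2) by (auto simp: finsupp_on_def)
  have "lin_ext t c y = (\<Sum>p\<in>{p. c p \<noteq> 0}. if y = p then c p else 0)"
    unfolding lin_ext_def by (rule sum.cong) (use sub assms(1) in \<open>auto simp: delta_def\<close>)
  also have "\<dots> = c y" using fin by simp
  finally show "lin_ext t c y = c y" .
qed

lemma diff_lin_ext_in_zspan:
  assumes "finite {p. f p \<noteq> 0}" and "\<And>p. f p \<noteq> 0 \<Longrightarrow> (\<lambda>x. delta p x - t p x) \<in> X"
  shows "(\<lambda>x. f x - lin_ext t f x) \<in> zspan X"
proof -
  let ?P = "{p. f p \<noteq> 0}"
  have "(\<lambda>x. f x - lin_ext t f x) = (\<lambda>x. \<Sum>p\<in>?P. f p * (\<lambda>x. delta p x - t p x) x)"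
  proof
    fix x
    have "(\<Sum>p\<in>?P. f p * delta p x) = f x"
      using assms(1) by (simp add: delta_def if_distrib cong: if_cong)
    then show "f x - lin_ext t f x = (\<Sum>p\<in>?P. f p * (\<lambda>x. delta p x - t p x) x)"
      by (simp add: lin_ext_def right_diff_distrib sum_subtractf)
  qed
  moreover have "(\<lambda>x. \<Sum>p\<in>?P. f p * (\<lambda>p x. delta p x - t p x) p x) \<in> zspan X"
    by (rule sum_in_zspan) (use assms in auto)
  ultimately show ?thesis by simp
qed

lemma
  assumes B: "B \<subseteq> I \<times> J"
    and nf_supp: "\<And>f. finsupp_on (I \<times> J) f \<Longrightarrow> finsupp_on B (lin_ext t f)"
    and nf_B: "\<And>p. p \<in> B \<Longrightarrow> t p = delta p"
    and nf_X: "\<And>g. g \<in> X \<Longrightarrow> finite {p. g p \<noteq> 0} \<and> (\<forall>y. lin_ext t g y = 0)"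
    and gen_X: "\<And>p. p \<in> I \<times> J \<Longrightarrow> (\<lambda>x. delta p x - t p x) \<in> X"
  shows ind_basis_by_normal_form: "ind_basis I J (zspan X) B"
    and ind_coeff_by_normal_form: "finsupp_on (I \<times> J) f \<Longrightarrow> ind_coeff (zspan X) B f = lin_ext t f"
proof -
  have unique: "(finsupp_on B c \<and> (\<lambda>x. f x - c x) \<in> zspan X) \<longleftrightarrow> c = lin_ext t f"
    if f: "finsupp_on (I \<times> J) f" for f c
  proof
    assume c: "finsupp_on B c \<and> (\<lambda>x. f x - c x) \<in> zspan X"
    show "c = lin_ext t f"
    proof
      fix y
      have "finite {p. f p \<noteq> 0}" "finite {p. c p \<noteq> 0}" using f c by (auto simp: finsupp_on_def)
      then have "lin_ext t (\<lambda>x. f x - c x) y = lin_ext t f y - lin_ext t c y" by (rule lin_ext_diff)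
      moreover have "lin_ext t (\<lambda>x. f x - c x) y = 0"
        using c by (intro lin_ext_zspan_eq_0[OF nf_X]) auto
      moreover have "lin_ext t c y = c y" using c lin_ext_id_on[OF nf_B] by auto
      ultimately show "c y = lin_ext t f y" by simp
    qed
  next
    assume "c = lin_ext t f"
    moreover have "(\<lambda>x. f x - lin_ext t f x) \<in> zspan X"
      using f by (intro diff_lin_ext_in_zspan gen_X) (auto simp: finsupp_on_def)
    ultimately show "finsupp_on B c \<and> (\<lambda>x. f x - c x) \<in> zspan X" using nf_supp[OF f] by simp
  qed
  then show "ind_basis I J (zspan X) B" using B unfolding ind_basis_def by simp
  show "finsupp_on (I \<times> J) f \<Longrightarrow> ind_coeff (zspan X) B f = lin_ext t f"
    unfolding ind_coeff_def by (simp only: unique the_eq_trivial)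
qed

definition tens_left :: "('i \<Rightarrow> 'i \<Rightarrow> 'i \<Rightarrow> nat) \<Rightarrow> 'i \<Rightarrow> 'i \<Rightarrow> 'j \<Rightarrow> ('i \<times> 'j \<Rightarrow> int)" where
  "tens_left NR r s n = (\<lambda>(i, j). if j = n then int (NR r s i) else 0)"

definition tens_right :: "('i \<Rightarrow> 'j \<Rightarrow> 'j \<Rightarrow> nat) \<Rightarrow> 'i \<Rightarrow> 'i \<Rightarrow> 'j \<Rightarrow> ('i \<times> 'j \<Rightarrow> int)" where
  "tens_right NM r s n = (\<lambda>(i, j). if i = r then int (NM s n j) else 0)"

lemma tens_rel_eq_diff: "tens_rel NR NM r s n = (\<lambda>x. tens_left NR r s n x - tens_right NM r s n x)"
  by (auto simp: tens_rel_def tens_left_def tens_right_def)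

lemma ind_action_delta: "ind_action NR \<alpha> (delta (r, n)) = tens_left NR \<alpha> r n"
proof -
  have "{i. \<exists>j. delta (r, n) (i, j) \<noteq> 0} = {r}" by (auto simp: delta_def)
  then show ?thesis by (auto simp: ind_action_def tens_left_def delta_def)
qed

locale based_ring_basis =
  fixes I :: "'i set" and one :: 'i and bar :: "'i \<Rightarrow> 'i" and NR :: "'i \<Rightarrow> 'i \<Rightarrow> 'i \<Rightarrow> nat"
  assumes based: "based_ring I one bar NR"
begin

lemma bar_mem: "a \<in> I \<Longrightarrow> bar a \<in> I"
  using based by (simp add: based_ring_def involutive_pointed_def)

lemma bar_bar: "a \<in> I \<Longrightarrow> bar (bar a) = a"
  using based by (simp add: based_ring_def involutive_pointed_def)

lemma finite_supp: "a \<in> I \<Longrightarrow> b \<in> I \<Longrightarrow> finite (supp3 NR a b)"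
  using based by (simp add: based_ring_def ring_struct_def)

lemma supp_subset: "a \<in> I \<Longrightarrow> b \<in> I \<Longrightarrow> supp3 NR a b \<subseteq> I"
  using based by (simp add: based_ring_def ring_struct_def)

lemma NR_nonzero_mem: "a \<in> I \<Longrightarrow> b \<in> I \<Longrightarrow> NR a b c \<noteq> 0 \<Longrightarrow> c \<in> I"
  using supp_subset by (auto simp: supp3_def)

lemma NR_one_left: "a \<in> I \<Longrightarrow> NR one a c = (if c = a then 1 else 0)"
  using based by (simp add: based_ring_def ring_struct_def)

lemma NR_one_right: "a \<in> I \<Longrightarrow> NR a one c = (if c = a then 1 else 0)"
  using based by (simp add: based_ring_def ring_struct_def)

lemma NR_assoc:
  "a \<in> I \<Longrightarrow> b \<in> I \<Longrightarrow> c \<in> I \<Longrightarrow>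
   (\<Sum>k\<in>supp3 NR a b. NR a b k * NR k c d) = (\<Sum>k\<in>supp3 NR b c. NR b c k * NR a k d)"
  using based by (simp add: based_ring_def ring_struct_def)

lemma NR_bar: "a \<in> I \<Longrightarrow> b \<in> I \<Longrightarrow> c \<in> I \<Longrightarrow> NR a b c = NR (bar b) (bar a) (bar c)"
  using based by (simp add: based_ring_def)

lemma NR_bar_one_nonzero_iff: "a \<in> I \<Longrightarrow> a' \<in> I \<Longrightarrow> NR (bar a) a' one \<noteq> 0 \<longleftrightarrow> a = a'"
  using based by (simp add: based_ring_def)

lemma sum_NR_nonzero_iff:
  "a \<in> I \<Longrightarrow> b \<in> I \<Longrightarrow> (\<Sum>k\<in>supp3 NR a b. NR a b k * g k) \<noteq> 0 \<longleftrightarrow> (\<exists>k. NR a b k \<noteq> 0 \<and> g k \<noteq> 0)"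
  for g :: "'i \<Rightarrow> nat"
  using finite_supp by (auto simp: supp3_def)

lemma finsupp_tens_left:
  assumes r: "r \<in> I" and s: "s \<in> I" and n: "n \<in> J"
  shows "finsupp_on (I \<times> J) (tens_left NR r s n)"
proof -
  have "{p. tens_left NR r s n p \<noteq> 0} \<subseteq> supp3 NR r s \<times> {n}"
    by (auto simp: tens_left_def supp3_def split: if_splits)
  moreover have "finite (supp3 NR r s \<times> {n})" using finite_supp[OF r s] by simp
  ultimately show ?thesis
    using supp_subset[OF r s] n by (auto simp: finsupp_on_def dest: finite_subset)
qed

text \<open>Compare the coefficients of one in (bar c \<otimes> a) \<otimes> b and bar c \<otimes> (a \<otimes> b).\<close>
lemma NR_rotate_nonzero:
  assumes a: "a \<in> I" and b: "b \<in> I" and c: "c \<in> I" and abc: "NR a b c \<noteq> 0"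
  shows "NR (bar c) a (bar b) \<noteq> 0"
proof -
  have "(\<Sum>k\<in>supp3 NR a b. NR a b k * NR (bar c) k one) \<noteq> 0"
    unfolding sum_NR_nonzero_iff[OF a b] using abc NR_bar_one_nonzero_iff[OF c c] by blast
  then have "(\<Sum>k\<in>supp3 NR (bar c) a. NR (bar c) a k * NR k b one) \<noteq> 0"
    using NR_assoc[OF bar_mem[OF c] a b] by simp
  then obtain k where k: "NR (bar c) a k \<noteq> 0" "NR k b one \<noteq> 0"
    unfolding sum_NR_nonzero_iff[OF bar_mem[OF c] a] by blast
  have kI: "k \<in> I" using NR_nonzero_mem[OF bar_mem[OF c] a k(1)] .
  have "bar k = b"
    using k(2) NR_bar_one_nonzero_iff[OF bar_mem[OF kI] b] by (simp add: bar_bar[OF kI])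
  then have "k = bar b" using bar_bar[OF kI] by metis
  then show ?thesis using k(1) by simp
qed

lemma NR_reciprocity_nonzero:
  assumes a: "a \<in> I" and b: "b \<in> I" and c: "c \<in> I" and abc: "NR a b c \<noteq> 0"
  shows "NR c (bar b) a \<noteq> 0"
proof -
  have "NR (bar (bar b)) (bar c) (bar a) \<noteq> 0"
    using NR_rotate_nonzero[OF bar_mem[OF c] a bar_mem[OF b] NR_rotate_nonzero[OF a b c abc]] .
  then have "NR b (bar c) (bar a) \<noteq> 0" using bar_bar[OF b] by simp
  then show ?thesis
    using NR_bar[OF b bar_mem[OF c] bar_mem[OF a]] by (simp add: bar_bar a c)
qed

text \<open>Since one occurs in bar b \<otimes> b, a = a \<otimes> one occurs in (a \<otimes> bar b) \<otimes> b.\<close>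
lemma ex_left_factor:
  assumes a: "a \<in> I" and b: "b \<in> I"
  shows "\<exists>k\<in>I. NR k b a \<noteq> 0"
proof -
  have "(\<Sum>k\<in>supp3 NR (bar b) b. NR (bar b) b k * NR a k a) \<noteq> 0"
    unfolding sum_NR_nonzero_iff[OF bar_mem[OF b] b]
    using NR_bar_one_nonzero_iff[OF b b] NR_one_right[OF a] by auto
  then have "(\<Sum>k\<in>supp3 NR a (bar b). NR a (bar b) k * NR k b a) \<noteq> 0"
    using NR_assoc[OF a bar_mem[OF b] b] by simp
  then obtain k where "NR a (bar b) k \<noteq> 0" "NR k b a \<noteq> 0"
    unfolding sum_NR_nonzero_iff[OF a bar_mem[OF b]] by blast
  then show ?thesis using NR_nonzero_mem[OF a bar_mem[OF b]] by blast
qed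

end

locale divisible_subring = based_ring_basis +
  fixes L :: "'i set" and \<Omega> :: "'i set" and \<phi> :: "'i \<Rightarrow> 'i \<times> 'i"
  assumes subring: "based_subring I one bar NR L"
    and \<phi>_bij: "bij_betw \<phi> I (\<Omega> \<times> L)"
    and left_mult_\<phi>: "\<forall>a\<in>L. \<forall>i\<in>I. \<forall>i'\<in>I.
           NR a i' i = (if fst (\<phi> i) = fst (\<phi> i') then NR a (snd (\<phi> i')) (snd (\<phi> i)) else 0)"
begin

lemma L_subset: "L \<subseteq> I"
  using subring by (simp add: based_subring_def)

lemma one_mem_L: "one \<in> L"
  using subring by (simp add: based_subring_def)

lemma bar_mem_L: "a \<in> L \<Longrightarrow> bar a \<in> L"
  using subring by (simp add: based_subring_def)

lemma supp_subset_L: "a \<in> L \<Longrightarrow> b \<in> L \<Longrightarrow> supp3 NR a b \<subseteq> L"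
  using subring by (simp add: based_subring_def)

text \<open>Divisibility splits R into blocks as a left S-module; conjugating by bar gives
  the splitting of R as a right S-module, which is the one that matters for R \<odot>_S N.\<close>
definition block :: "'i \<Rightarrow> 'i" where
  "block i = fst (\<phi> (bar i))"

definition coord :: "'i \<Rightarrow> 'i" where
  "coord i = bar (snd (\<phi> (bar i)))"

definition elem :: "'i \<Rightarrow> 'i \<Rightarrow> 'i" where
  "elem w l = bar (inv_into I \<phi> (w, bar l))"

lemma \<phi>_mem: "i \<in> I \<Longrightarrow> \<phi> i \<in> \<Omega> \<times> L"
  using \<phi>_bij by (auto simp: bij_betw_def)

lemma block_mem: "i \<in> I \<Longrightarrow> block i \<in> \<Omega>"
  using \<phi>_mem[OF bar_mem] by (auto simp: block_def mem_Times_iff)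

lemma coord_mem: "i \<in> I \<Longrightarrow> coord i \<in> L"
  using \<phi>_mem[OF bar_mem] bar_mem_L by (auto simp: coord_def mem_Times_iff)

lemma
  assumes "w \<in> \<Omega>" "l \<in> L"
  shows elem_mem: "elem w l \<in> I"
    and block_elem: "block (elem w l) = w"
    and coord_elem: "coord (elem w l) = l"
proof -
  have wl: "(w, bar l) \<in> \<phi> ` I" using assms bar_mem_L \<phi>_bij by (auto simp: bij_betw_def)
  have x: "inv_into I \<phi> (w, bar l) \<in> I" "\<phi> (inv_into I \<phi> (w, bar l)) = (w, bar l)"
    using inv_into_into[OF wl] f_inv_into_f[OF wl] .
  show "elem w l \<in> I" using bar_mem[OF x(1)] by (simp add: elem_def)
  show "block (elem w l) = w" "coord (elem w l) = l"
    using x assms(2) L_subset by (auto simp: elem_def block_def coord_def bar_bar)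
qed

lemma elem_block_coord:
  assumes i: "i \<in> I"
  shows "elem (block i) (coord i) = i"
proof -
  have "snd (\<phi> (bar i)) \<in> I" using \<phi>_mem[OF bar_mem[OF i]] L_subset by auto
  then have "(block i, bar (coord i)) = \<phi> (bar i)" by (simp add: block_def coord_def bar_bar)
  then show ?thesis
    by (simp add: elem_def bij_betw_inv_into_left[OF \<phi>_bij bar_mem[OF i]] bar_bar[OF i])
qed

lemma eq_if_block_coord_eq:
  "i \<in> I \<Longrightarrow> i' \<in> I \<Longrightarrow> block i = block i' \<Longrightarrow> coord i = coord i' \<Longrightarrow> i = i'"
  by (metis elem_block_coord)

lemma NR_right_mult:
  assumes r: "r \<in> I" and s: "s \<in> L" and i: "i \<in> I"
  shows "NR r s i = (if block i = block r then NR (coord r) s (coord i) else 0)"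
proof -
  have sI: "s \<in> I" using s L_subset by blast
  have L: "snd (\<phi> (bar r)) \<in> L" "snd (\<phi> (bar i)) \<in> L"
    using \<phi>_mem[OF bar_mem[OF r]] \<phi>_mem[OF bar_mem[OF i]] by (auto simp: mem_Times_iff)
  then have LI: "snd (\<phi> (bar r)) \<in> I" "snd (\<phi> (bar i)) \<in> I" using L_subset by auto
  have "NR r s i = NR (bar s) (bar r) (bar i)" using NR_bar r sI i by blast
  also have "\<dots> = (if block i = block r
      then NR (bar s) (snd (\<phi> (bar r))) (snd (\<phi> (bar i))) else 0)"
    using left_mult_\<phi> bar_mem_L[OF s] bar_mem r i by (simp add: block_def)
  also have "NR (bar s) (snd (\<phi> (bar r))) (snd (\<phi> (bar i))) = NR (coord r) s (coord i)"
    using NR_bar[OF bar_mem[OF sI] LI] bar_bar[OF sI] by (simp add: coord_def)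
  finally show ?thesis .
qed

lemma NR_right_mult_nonzeroD:
  assumes r: "r \<in> I" and s: "s \<in> L" and rsi: "NR r s i \<noteq> 0"
  shows "i \<in> I" and "block i = block r"
proof -
  show i: "i \<in> I" using NR_nonzero_mem[OF r _ rsi] s L_subset by blast
  show "block i = block r" using rsi NR_right_mult[OF r s i] by (auto split: if_splits)
qed

lemma bij_betw_coord_supp:
  assumes r: "r \<in> I" and s: "s \<in> L"
  shows "bij_betw coord (supp3 NR r s) (supp3 NR (coord r) s)"
proof (rule bij_betw_imageI)
  show "inj_on coord (supp3 NR r s)"
    using NR_right_mult_nonzeroD[OF r s] eq_if_block_coord_eq
    by (auto simp: supp3_def intro!: inj_onI)
  show "coord ` supp3 NR r s = supp3 NR (coord r) s"
  proof
    show "coord ` supp3 NR r s \<subseteq> supp3 NR (coord r) s"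
    proof (rule image_subsetI)
      fix i assume "i \<in> supp3 NR r s"
      then have rsi: "NR r s i \<noteq> 0" by (simp add: supp3_def)
      then show "coord i \<in> supp3 NR (coord r) s"
        using NR_right_mult[OF r s] NR_right_mult_nonzeroD[OF r s rsi] by (simp add: supp3_def)
    qed
  next
    show "supp3 NR (coord r) s \<subseteq> coord ` supp3 NR r s"
    proof
      fix k assume k: "k \<in> supp3 NR (coord r) s"
      have "k \<in> L" using k supp_subset_L[OF coord_mem[OF r] s] by blast
      then have i: "elem (block r) k \<in> I" "block (elem (block r) k) = block r"
          "coord (elem (block r) k) = k"
        using block_mem[OF r] elem_mem block_elem coord_elem by auto
      then have "elem (block r) k \<in> supp3 NR r s"
        using k NR_right_mult[OF r s i(1)] by (simp add: supp3_def)
      then show "k \<in> coord ` supp3 NR r s" using i(3) by force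
    qed
  qed
qed

definition block_one :: "'i \<Rightarrow> 'i" where
  "block_one i = elem (block i) one"

lemma
  assumes "i \<in> I"
  shows block_one_mem: "block_one i \<in> I"
    and block_block_one: "block (block_one i) = block i"
    and coord_block_one: "coord (block_one i) = one"
  using elem_mem block_elem coord_elem block_mem[OF assms] one_mem_L by (auto simp: block_one_def)

lemma block_one_eq_self: "i \<in> I \<Longrightarrow> coord i = one \<Longrightarrow> block_one i = i"
  using elem_block_coord[of i] by (simp add: block_one_def)

lemma NR_block_one_coord:
  assumes i: "i \<in> I"
  shows "NR (block_one i) (coord i) x = (if x = i then 1 else 0)"
proof (cases "x \<in> I")
  case True
  have "NR (block_one i) (coord i) x = (if block x = block i then NR one (coord i) (coord x) else 0)"
    using NR_right_mult[OF block_one_mem[OF i] coord_mem[OF i] True]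
    by (simp add: block_block_one[OF i] coord_block_one[OF i])
  moreover have "NR one (coord i) c = (if c = coord i then 1 else 0)" for c
    using NR_one_left coord_mem[OF i] L_subset by auto
  ultimately show ?thesis
    using eq_if_block_coord_eq[OF True i] by (cases "x = i") (simp_all, blast)
next
  case False
  have "coord i \<in> I" using coord_mem[OF i] L_subset by blast
  then have "NR (block_one i) (coord i) x = 0"
    using False NR_nonzero_mem[OF block_one_mem[OF i]] by blast
  then show ?thesis using False i by auto
qed

end

locale induced_module = divisible_subring I one bar NR L \<Omega> \<phi>
  for I :: "'i set" and one bar NR L \<Omega> \<phi> +
  fixes J :: "'j set" and NM :: "'i \<Rightarrow> 'j \<Rightarrow> 'j \<Rightarrow> nat"
  assumes module: "module_struct L one NR J NM"
begin

lemma finite_supp_NM: "a \<in> L \<Longrightarrow> n \<in> J \<Longrightarrow> finite (supp3 NM a n)"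
  using module by (simp add: module_struct_def)

lemma NM_nonzero_mem: "a \<in> L \<Longrightarrow> n \<in> J \<Longrightarrow> NM a n j \<noteq> 0 \<Longrightarrow> j \<in> J"
  using module by (auto simp: module_struct_def supp3_def)

lemma NM_one: "n \<in> J \<Longrightarrow> NM one n j = (if j = n then 1 else 0)"
  using module by (simp add: module_struct_def)

lemma NM_assoc:
  "a \<in> L \<Longrightarrow> b \<in> L \<Longrightarrow> n \<in> J \<Longrightarrow>
   (\<Sum>k\<in>supp3 NR a b. NR a b k * NM k n j) = (\<Sum>j'\<in>supp3 NM b n. NM b n j' * NM a j' j)"
  using module by (simp add: module_struct_def)

lemma finsupp_tens_right:
  assumes r: "r \<in> I" and s: "s \<in> L" and n: "n \<in> J"
  shows "finsupp_on (I \<times> J) (tens_right NM r s n)"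
proof -
  have "{p. tens_right NM r s n p \<noteq> 0} \<subseteq> {r} \<times> supp3 NM s n"
    by (auto simp: tens_right_def supp3_def split: if_splits)
  moreover have "finite ({r} \<times> supp3 NM s n)" using finite_supp_NM[OF s n] by simp
  moreover have "supp3 NM s n \<subseteq> J" using NM_nonzero_mem[OF s n] by (auto simp: supp3_def)
  ultimately show ?thesis using r by (auto simp: finsupp_on_def dest: finite_subset)
qed

text \<open>i \<odot> n = (block_one i \<otimes> coord i) \<odot> n is equivalent to block_one i \<odot> (coord i \<otimes> n)
  modulo the balancing relations.\<close>
definition normal_form_gen :: "'i \<times> 'j \<Rightarrow> 'i \<times> 'j \<Rightarrow> int" where
  "normal_form_gen p = tens_right NM (block_one (fst p)) (coord (fst p)) (snd p)"

definition std_basis :: "('i \<times> 'j) set" where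
  "std_basis = {i \<in> I. coord i = one} \<times> J"

lemma normal_form_gen_std_basis:
  assumes "p \<in> std_basis"
  shows "normal_form_gen p = delta p"
proof -
  obtain i n where p: "p = (i, n)" and i: "i \<in> I" "coord i = one" and n: "n \<in> J"
    using assms by (auto simp: std_basis_def)
  then show ?thesis
    using block_one_eq_self[OF i] NM_one[OF n]
    by (auto simp: normal_form_gen_def tens_right_def delta_def)
qed

lemma normal_form_tens_right:
  assumes r: "r \<in> I" and s: "s \<in> L" and n: "n \<in> J"
  shows "lin_ext normal_form_gen (tens_right NM r s n) (b, j) =
    (if b = block_one r then int (\<Sum>j'\<in>supp3 NM s n. NM s n j' * NM (coord r) j' j) else 0)"
proof -
  have "{p. tens_right NM r s n p \<noteq> 0} \<subseteq> Pair r ` supp3 NM s n"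
    by (auto simp: tens_right_def supp3_def split: if_splits)
  then have "lin_ext normal_form_gen (tens_right NM r s n) (b, j) =
      (\<Sum>p\<in>Pair r ` supp3 NM s n. tens_right NM r s n p * normal_form_gen p (b, j))"
    using finite_supp_NM[OF s n] by (intro lin_ext_eq_sum) auto
  also have "\<dots> = (\<Sum>j'\<in>supp3 NM s n. tens_right NM r s n (r, j') * normal_form_gen (r, j') (b, j))"
    by (subst sum.reindex) (auto simp: inj_on_def)
  also have "\<dots> = (if b = block_one r then int (\<Sum>j'\<in>supp3 NM s n. NM s n j' * NM (coord r) j' j) else 0)"
    by (simp add: tens_right_def normal_form_gen_def)
  finally show ?thesis .
qed

lemma normal_form_tens_left:
  assumes r: "r \<in> I" and s: "s \<in> I" and n: "n \<in> J"
  shows "lin_ext normal_form_gen (tens_left NR r s n) (b, j) =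
    int (\<Sum>i\<in>supp3 NR r s. NR r s i * (if b = block_one i then NM (coord i) n j else 0))"
proof -
  have "{p. tens_left NR r s n p \<noteq> 0} \<subseteq> (\<lambda>i. (i, n)) ` supp3 NR r s"
    by (auto simp: tens_left_def supp3_def split: if_splits)
  then have "lin_ext normal_form_gen (tens_left NR r s n) (b, j) =
      (\<Sum>p\<in>(\<lambda>i. (i, n)) ` supp3 NR r s. tens_left NR r s n p * normal_form_gen p (b, j))"
    using finite_supp[OF r s] by (intro lin_ext_eq_sum) auto
  also have "\<dots> = (\<Sum>i\<in>supp3 NR r s. tens_left NR r s n (i, n) * normal_form_gen (i, n) (b, j))"
    by (simp add: sum.reindex inj_on_def)
  also have "\<dots> = int (\<Sum>i\<in>supp3 NR r s. NR r s i * (if b = block_one i then NM (coord i) n j else 0))"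
    by (auto simp: tens_left_def normal_form_gen_def tens_right_def intro!: sum.cong)
  finally show ?thesis .
qed

lemma normal_form_tens_left_subring:
  assumes r: "r \<in> I" and s: "s \<in> L" and n: "n \<in> J"
  shows "lin_ext normal_form_gen (tens_left NR r s n) (b, j) =
    (if b = block_one r then int (\<Sum>k\<in>supp3 NR (coord r) s. NR (coord r) s k * NM k n j) else 0)"
proof -
  have sI: "s \<in> I" using s L_subset by blast
  have supp: "i \<in> I" "block_one i = block_one r" "NR r s i = NR (coord r) s (coord i)"
    if "i \<in> supp3 NR r s" for i
  proof -
    have rsi: "NR r s i \<noteq> 0" using that by (simp add: supp3_def)
    show "i \<in> I" "block_one i = block_one r"
      using NR_right_mult_nonzeroD[OF r s rsi] by (simp_all add: block_one_def)
    then show "NR r s i = NR (coord r) s (coord i)"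
      using NR_right_mult[OF r s] NR_right_mult_nonzeroD[OF r s rsi] by simp
  qed
  have "lin_ext normal_form_gen (tens_left NR r s n) (b, j) =
      int (\<Sum>i\<in>supp3 NR r s. if b = block_one r then NR (coord r) s (coord i) * NM (coord i) n j else 0)"
    unfolding normal_form_tens_left[OF r sI n] using supp by (auto intro!: sum.cong)
  also have "\<dots> = (if b = block_one r then
      int (\<Sum>i\<in>supp3 NR r s. NR (coord r) s (coord i) * NM (coord i) n j) else 0)"
    by simp
  also have "(\<Sum>i\<in>supp3 NR r s. NR (coord r) s (coord i) * NM (coord i) n j) =
      (\<Sum>k\<in>supp3 NR (coord r) s. NR (coord r) s k * NM k n j)"
    using sum.reindex_bij_betw[OF bij_betw_coord_supp[OF r s]] .
  finally show ?thesis .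
qed

lemma normal_form_tens_rel:
  assumes r: "r \<in> I" and s: "s \<in> L" and n: "n \<in> J"
  shows "lin_ext normal_form_gen (tens_rel NR NM r s n) y = 0"
proof -
  obtain b j where y: "y = (b, j)" by fastforce
  have "finite {p. tens_left NR r s n p \<noteq> 0}" "finite {p. tens_right NM r s n p \<noteq> 0}"
    using finsupp_tens_left[OF r _ n] finsupp_tens_right[OF r s n] s L_subset
    by (auto simp: finsupp_on_def)
  then have "lin_ext normal_form_gen (tens_rel NR NM r s n) y =
      lin_ext normal_form_gen (tens_left NR r s n) y - lin_ext normal_form_gen (tens_right NM r s n) y"
    unfolding tens_rel_eq_diff by (rule lin_ext_diff)
  then show ?thesis
    using normal_form_tens_left_subring[OF r s n] normal_form_tens_right[OF r s n]
      NM_assoc[OF coord_mem[OF r] s n] by (simp add: y)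
qed

lemma finsupp_normal_form:
  assumes f: "finsupp_on (I \<times> J) f"
  shows "finsupp_on std_basis (lin_ext normal_form_gen f)"
proof -
  let ?P = "{p. f p \<noteq> 0}"
  let ?U = "\<Union>p\<in>?P. {block_one (fst p)} \<times> supp3 NM (coord (fst p)) (snd p)"
  have P: "finite ?P" "?P \<subseteq> I \<times> J" using f by (auto simp: finsupp_on_def)
  have "{y. lin_ext normal_form_gen f y \<noteq> 0} \<subseteq> ?U"
  proof
    fix y assume "y \<in> {y. lin_ext normal_form_gen f y \<noteq> 0}"
    then obtain p where p: "p \<in> ?P" "f p * normal_form_gen p y \<noteq> 0"
      unfolding lin_ext_def by (auto elim: sum.not_neutral_contains_not_neutral)
    then have "fst y = block_one (fst p)" "NM (coord (fst p)) (snd p) (snd y) \<noteq> 0"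
      by (auto simp: normal_form_gen_def tens_right_def split: prod.splits if_splits)
    then show "y \<in> ?U" using p(1) by (intro UN_I[of p]) (auto simp: supp3_def mem_Times_iff)
  qed
  moreover have "finite ?U"
    using P finite_supp_NM coord_mem by auto
  moreover have "?U \<subseteq> std_basis"
    using P block_one_mem coord_block_one coord_mem NM_nonzero_mem
    by (fastforce simp: std_basis_def supp3_def)
  ultimately show ?thesis unfolding finsupp_on_def by (auto dest: finite_subset)
qed

lemma delta_minus_normal_form_gen:
  assumes i: "i \<in> I"
  shows "(\<lambda>x. delta (i, n) x - normal_form_gen (i, n) x) = tens_rel NR NM (block_one i) (coord i) n"
proof -
  have "tens_left NR (block_one i) (coord i) n = delta (i, n)"
    using NR_block_one_coord[OF i] by (auto simp: tens_left_def delta_def)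
  then show ?thesis by (simp add: tens_rel_eq_diff normal_form_gen_def)
qed

lemma
  shows ind_basis_std_basis: "ind_basis I J (ind_rels I L J NR NM) std_basis"
    and ind_coeff_std_basis: "finsupp_on (I \<times> J) f \<Longrightarrow>
      ind_coeff (ind_rels I L J NR NM) std_basis f = lin_ext normal_form_gen f"
proof -
  let ?X = "{tens_rel NR NM r s n | r s n. r \<in> I \<and> s \<in> L \<and> n \<in> J}"
  have basis: "std_basis \<subseteq> I \<times> J" by (auto simp: std_basis_def)
  have rels: "finite {p. g p \<noteq> 0} \<and> (\<forall>y. lin_ext normal_form_gen g y = 0)" if "g \<in> ?X" for g
  proof -
    obtain r s n where g: "g = tens_rel NR NM r s n" and rsn: "r \<in> I" "s \<in> L" "n \<in> J"
      using \<open>g \<in> ?X\<close> by blast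
    have "finite {p. tens_left NR r s n p \<noteq> 0}" "finite {p. tens_right NM r s n p \<noteq> 0}"
      using finsupp_tens_left[OF rsn(1) _ rsn(3)] finsupp_tens_right[OF rsn] rsn(2) L_subset
      by (auto simp: finsupp_on_def)
    moreover have "{p. g p \<noteq> 0} \<subseteq> {p. tens_left NR r s n p \<noteq> 0} \<union> {p. tens_right NM r s n p \<noteq> 0}"
      unfolding g tens_rel_eq_diff by auto
    ultimately have "finite {p. g p \<noteq> 0}" by (meson finite_UnI finite_subset)
    then show ?thesis using normal_form_tens_rel[OF rsn] g by simp
  qed
  have gens: "(\<lambda>x. delta p x - normal_form_gen p x) \<in> ?X" if "p \<in> I \<times> J" for p
    using that delta_minus_normal_form_gen block_one_mem coord_mem by fastforce
  show "ind_basis I J (ind_rels I L J NR NM) std_basis"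
    unfolding ind_rels_def
    by (rule ind_basis_by_normal_form[OF basis finsupp_normal_form normal_form_gen_std_basis rels gens])
  show "finsupp_on (I \<times> J) f \<Longrightarrow> ind_coeff (ind_rels I L J NR NM) std_basis f = lin_ext normal_form_gen f"
    unfolding ind_rels_def
    by (rule ind_coeff_by_normal_form[OF basis finsupp_normal_form normal_form_gen_std_basis rels gens])
qed

lemma ind_const_eq:
  assumes \<alpha>: "\<alpha> \<in> I" and r': "r' \<in> I" and j': "j' \<in> J"
  shows "ind_const I L J NR NM std_basis \<alpha> (r', j') (r, j) =
    int (\<Sum>i\<in>supp3 NR \<alpha> r'. NR \<alpha> r' i * (if r = block_one i then NM (coord i) j' j else 0))"
  unfolding ind_const_def ind_action_delta ind_coeff_std_basis[OF finsupp_tens_left[OF \<alpha> r' j']]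
  by (rule normal_form_tens_left[OF \<alpha> r' j'])

lemma ind_const_nonneg:
  assumes \<alpha>: "\<alpha> \<in> I" and b': "b' \<in> std_basis"
  shows "0 \<le> ind_const I L J NR NM std_basis \<alpha> b' b"
proof -
  obtain r' j' where b': "b' = (r', j')" and r': "r' \<in> I" and j': "j' \<in> J"
    using b' by (auto simp: std_basis_def)
  obtain r j where b: "b = (r, j)" by fastforce
  show ?thesis unfolding b b' ind_const_eq[OF \<alpha> r' j'] by (rule of_nat_0_le_iff)
qed

lemma ind_const_nonzero_iff:
  assumes \<alpha>: "\<alpha> \<in> I" and r': "r' \<in> I" and j': "j' \<in> J"
  shows "ind_const I L J NR NM std_basis \<alpha> (r', j') (r, j) \<noteq> 0 \<longleftrightarrow>
    (\<exists>i. NR \<alpha> r' i \<noteq> 0 \<and> r = block_one i \<and> NM (coord i) j' j \<noteq> 0)"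
  unfolding ind_const_eq[OF assms] of_nat_eq_0_iff sum_NR_nonzero_iff[OF \<alpha> r'] by auto

lemma finite_ind_const_support:
  assumes cofinite: "cofinite_module L J NM" and b: "b \<in> std_basis" and b': "b' \<in> std_basis"
  shows "finite {\<alpha> \<in> I. ind_const I L J NR NM std_basis \<alpha> b' b \<noteq> 0}"
proof -
  obtain r j r' j' where rj: "b = (r, j)" "r \<in> I" "j \<in> J" and rj': "b' = (r', j')" "r' \<in> I" "j' \<in> J"
    using b b' by (auto simp: std_basis_def)
  define \<Phi> where "\<Phi> = {i \<in> I. block_one i = r \<and> NM (coord i) j' j \<noteq> 0}"
  have block_\<Phi>: "i \<in> I \<and> block i = block r" if "i \<in> \<Phi>" for i
  proof -
    have "i \<in> I" "block_one i = r" using that by (auto simp: \<Phi>_def)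
    then show ?thesis using block_block_one[of i] by simp
  qed
  have "inj_on coord \<Phi>"
    using block_\<Phi> eq_if_block_coord_eq by (intro inj_onI) metis
  moreover have "coord ` \<Phi> \<subseteq> {a \<in> L. NM a j' j \<noteq> 0}" using coord_mem by (auto simp: \<Phi>_def)
  moreover have "finite {a \<in> L. NM a j' j \<noteq> 0}"
    using cofinite rj rj' by (auto simp: cofinite_module_def)
  ultimately have "finite \<Phi>" by (meson finite_imageD finite_subset)
  then have "finite (\<Union>i\<in>\<Phi>. supp3 NR i (bar r'))"
    using finite_supp bar_mem[OF rj'(2)] by (auto simp: \<Phi>_def)
  moreover have "{\<alpha> \<in> I. ind_const I L J NR NM std_basis \<alpha> b' b \<noteq> 0} \<subseteq> (\<Union>i\<in>\<Phi>. supp3 NR i (bar r'))"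
  proof
    fix \<alpha> assume "\<alpha> \<in> {\<alpha> \<in> I. ind_const I L J NR NM std_basis \<alpha> b' b \<noteq> 0}"
    then have \<alpha>: "\<alpha> \<in> I" and "ind_const I L J NR NM std_basis \<alpha> (r', j') (r, j) \<noteq> 0"
      using rj rj' by auto
    then obtain i where i: "NR \<alpha> r' i \<noteq> 0" "r = block_one i" "NM (coord i) j' j \<noteq> 0"
      using ind_const_nonzero_iff[OF \<alpha> rj'(2,3)] by blast
    have iI: "i \<in> I" using NR_nonzero_mem[OF \<alpha> rj'(2) i(1)] .
    then have "i \<in> \<Phi>" using i by (simp add: \<Phi>_def)
    moreover have "NR i (bar r') \<alpha> \<noteq> 0" using NR_reciprocity_nonzero[OF \<alpha> rj'(2) iI i(1)] .
    ultimately show "\<alpha> \<in> (\<Union>i\<in>\<Phi>. supp3 NR i (bar r'))" by (auto simp: supp3_def)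
  qed
  ultimately show ?thesis by (rule finite_subset[rotated])
qed

lemma ind_const_connected:
  assumes connected: "connected_module L J NM" and b: "b \<in> std_basis" and b': "b' \<in> std_basis"
  shows "\<exists>\<alpha>\<in>I. ind_const I L J NR NM std_basis \<alpha> b' b \<noteq> 0"
proof -
  obtain r j r' j' where rj: "b = (r, j)" "r \<in> I" "coord r = one" "j \<in> J"
    and rj': "b' = (r', j')" "r' \<in> I" "j' \<in> J"
    using b b' by (auto simp: std_basis_def)
  obtain l where l: "l \<in> L" "NM l j' j \<noteq> 0"
    using connected rj rj' by (auto simp: connected_module_def)
  define i where "i = elem (block r) l"
  have i: "i \<in> I" "block i = block r" "coord i = l"
    using elem_mem block_elem coord_elem block_mem[OF rj(2)] l(1) by (auto simp: i_def)
  have "block_one i = r"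
    using i(2) elem_block_coord[OF rj(2)] rj(3) by (simp add: block_one_def)
  moreover obtain k where k: "k \<in> I" "NR k r' i \<noteq> 0" using ex_left_factor[OF i(1) rj'(2)] by blast
  ultimately have "ind_const I L J NR NM std_basis k b' b \<noteq> 0"
    using ind_const_nonzero_iff[OF k(1) rj'(2,3)] i(3) l(2) rj(1) rj'(1) by blast
  then show ?thesis using k(1) by blast
qed

end

theorem lemma3p1:
  fixes I L :: "'i set" and one :: 'i and bar :: "'i \<Rightarrow> 'i"
    and NR :: "'i \<Rightarrow> 'i \<Rightarrow> 'i \<Rightarrow> nat"
    and J :: "'j set" and NM :: "'i \<Rightarrow> 'j \<Rightarrow> 'j \<Rightarrow> nat"
  assumes R: "based_ring I one bar NR"
    and S: "based_ring L one bar NR"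
    and sub: "based_subring I one bar NR L"
    and N: "based_module L one bar NR J NM"
    and div: "divisible I L NR"
    and tors: "torsion_module L J NM"
  shows "\<exists>B. ind_basis I J (ind_rels I L J NR NM) B
           \<and> (\<forall>\<alpha>\<in>I. \<forall>b'\<in>B. \<forall>b\<in>B. ind_const I L J NR NM B \<alpha> b' b \<ge> 0)
           \<and> (\<forall>b\<in>B. \<forall>b'\<in>B. finite {\<alpha>\<in>I. ind_const I L J NR NM B \<alpha> b' b \<noteq> 0})
           \<and> (\<forall>b\<in>B. \<forall>b'\<in>B. \<exists>\<alpha>\<in>I. ind_const I L J NR NM B \<alpha> b' b \<noteq> 0)"
proof -
  obtain \<Omega> :: "'i set" and \<phi> :: "'i \<Rightarrow> 'i \<times> 'i" where bij: "bij_betw \<phi> I (\<Omega> \<times> L)"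
    and left_mult: "\<forall>a\<in>L. \<forall>i\<in>I. \<forall>i'\<in>I.
           NR a i' i = (if fst (\<phi> i) = fst (\<phi> i') then NR a (snd (\<phi> i')) (snd (\<phi> i)) else 0)"
    using div unfolding divisible_def by blast
  have "module_struct L one NR J NM" using N by (simp add: based_module_def)
  then interpret induced_module I one bar NR L \<Omega> \<phi> J NM
    using R sub bij left_mult by unfold_locales
  have cofinite: "cofinite_module L J NM" and connected: "connected_module L J NM"
    using tors by (simp_all add: torsion_module_def)
  show ?thesis
    by (intro exI[of _ std_basis] conjI ballI ind_basis_std_basis ind_const_nonneg
        finite_ind_const_support[OF cofinite] ind_const_connected[OF connected]) assumption+
qed

end
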